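(* Let $h:\mathbb{R}^p\times[t_0,t_f)\to\mathbb{R}$ be a CBF for the first-order system $\dot{\mathbf{p}}=\mathbf{f}(\mathbf{p})+\mathbf{G}(\mathbf{p})\mathbf{z}$ on a set-valued flow $\mathcal{D}:[t_0,t_f)\rightrightarrows\mathbb{R}^p$, and let $\mathbf{k}:\mathbb{R}^p\times[t_0,t_f)\to\mathbb{R}^z$ be continuously differentiable with $\dot h(\mathbf{p},t,\mathbf{k}(\mathbf{p},t))>-\alpha(h(\mathbf{p},t))$ for all $(\mathbf{p},t)\in\mathcal{G}(\mathcal{D})$, where $\alpha$ is an extended class-$\mathcal{K}_\infty$ function. For $\sigma>0$ define $h_1:\mathbb{R}^p\times\mathbb{R}^z\times[t_0,t_f)\to\mathbb{R}$ by $h_1(\mathbf{p},\mathbf{z},t)=h(\mathbf{p},t)-\frac{1}{2\sigma}\|\mathbf{z}-\mathbf{k}(\mathbf{p},t)\|^2$. Then $h_1$ is a CBF for the second-order system $\dot{\mathbf{p}}=\mathbf{f}(\mathbf{p})+\mathbf{G}(\mathbf{p})\mathbf{z}$, $\dot{\mathbf{z}}=\mathbf{f}_1(\mathbf{p},\mathbf{z})+\mathbf{G}_1(\mathbf{p},\mathbf{z})\mathbf{u}$, with any associated extended class-$\mathcal{K}_\infty$ function $\alpha_1$ satisfying $\alpha_1(s)\ge\alpha(s)$ for all $s\in\mathbb{R}$.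
   Context: First-order model: $\dot{\mathbf{p}}=\mathbf{f}(\mathbf{p})+\mathbf{G}(\mathbf{p})\mathbf{z}$, $\mathbf{p}\in\mathbb{R}^p$, $\mathbf{z}\in\mathbb{R}^z$, $\mathbf{f},\mathbf{G}$ locally Lipschitz, $\mathbf{G}(\mathbf{p})$ full row rank for all $\mathbf{p}$. Second-order strict-feedback model: state $(\mathbf{p},\mathbf{z})$, input $\mathbf{u}\in\mathbb{R}^m$, with additionally $\mathbf{f}_1:\mathbb{R}^p\times\mathbb{R}^z\to\mathbb{R}^z$, $\mathbf{G}_1:\mathbb{R}^p\times\mathbb{R}^z\to\mathbb{R}^{z\times m}$ locally Lipschitz and $\mathbf{G}_1(\mathbf{p},\mathbf{z})$ of full row rank for all $(\mathbf{p},\mathbf{z})$. A continuous $\alpha:\mathbb{R}\to\mathbb{R}$ is extended class-$\mathcal{K}_\infty$ if strictly increasing, $\alpha(0)=0$, $\lim_{s\to\pm\infty}\alpha(s)=\pm\infty$. Graph of a set-valued flow $\mathcal{D}$: $\mathcal{G}(\mathcal{D})=\{(\mathbf{x},t):\mathbf{x}\in\mathcal{D}(t)\}$. CBF definition (for a control-affine system $\dot{\mathbf{x}}=\mathbf{F}(\mathbf{x})+\mathbf{B}(\mathbf{x})\mathbf{v}$ with state $\mathbf{x}\in\mathbb{R}^n$, input $\mathbf{v}$): a continuously differentiable $h:\mathbb{R}^n\times[t_0,t_f)\to\mathbb{R}$ with $\frac{\partial}{\partial\mathbf{x}}h\ne\mathbf{0}$ whenever $h=0$, and $\mathcal{C}(t)=\{\mathbf{x}:h(\mathbf{x},t)\ge0\}$,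 is a CBF on the set-valued flow $\mathcal{D}$ (with $\mathcal{C}(t)\subseteq\mathcal{D}(t)$ for all $t$) with associated extended class-$\mathcal{K}_\infty$ function $\alpha$ if for all $(\mathbf{x},t)\in\mathcal{G}(\mathcal{D})$, $\sup_{\mathbf{v}}\dot h(\mathbf{x},t,\mathbf{v})>-\alpha(h(\mathbf{x},t))$, where $\dot h(\mathbf{x},t,\mathbf{v})=\frac{\partial h}{\partial\mathbf{x}}(\mathbf{F}(\mathbf{x})+\mathbf{B}(\mathbf{x})\mathbf{v})+\frac{\partial h}{\partial t}$. For the first-order model, $\dot h(\mathbf{p},t,\mathbf{z})=\frac{\partial h}{\partial\mathbf{p}}(\mathbf{f}(\mathbf{p})+\mathbf{G}(\mathbf{p})\mathbf{z})+\frac{\partial h}{\partial t}$; "CBF for the second-order system" means this definition with $\mathbf{x}=(\mathbf{p},\mathbf{z})$ and input $\mathbf{u}$ (existence of some suitable flow $\mathcal{D}_1$). *)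

theory Defs
  imports "HOL-Analysis.Analysis"
begin

definition time_dom :: "real \<Rightarrow> ereal \<Rightarrow> real set" where
  "time_dom t0 tf = {t. t0 \<le> t \<and> ereal t < tf}"

definition loc_lipschitz :: "('a::metric_space \<Rightarrow> 'b::metric_space) \<Rightarrow> bool" where
  "loc_lipschitz f \<longleftrightarrow> (\<forall>x. \<exists>e>0. \<exists>L. L-lipschitz_on (ball x e) f)"

definition ext_class_Kinf :: "(real \<Rightarrow> real) \<Rightarrow> bool" where
  "ext_class_Kinf \<alpha> \<longleftrightarrow> continuous_on UNIV \<alpha> \<and> strict_mono \<alpha> \<and> \<alpha> 0 = 0 \<and>
     filterlim \<alpha> at_top at_top \<and> filterlim \<alpha> at_bot at_bot"

definition C1_on :: "'a::real_normed_vector set \<Rightarrow> ('a \<Rightarrow> 'b::real_normed_vector) \<Rightarrow> bool" where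
  "C1_on S g \<longleftrightarrow> (\<exists>Dg. continuous_on S Dg \<and>
      (\<forall>y\<in>S. (g has_derivative blinfun_apply (Dg y)) (at y within S)))"

definition flow_graph :: "real set \<Rightarrow> (real \<Rightarrow> 'x set) \<Rightarrow> ('x \<times> real) set" where
  "flow_graph T D = {(x, t). t \<in> T \<and> x \<in> D t}"

text \<open>Time derivative of h along the control-affine system xdot = F x + B x v, where
  Dh (x,t) is the (Frechet) derivative of h at (x,t); Dh (x,t) (w, 1) = dh/dx w + dh/dt.\<close>
definition hdot :: "('x::real_normed_vector \<times> real \<Rightarrow> ('x \<times> real) \<Rightarrow>\<^sub>L real) \<Rightarrow>
     ('x \<Rightarrow> 'x) \<Rightarrow> ('x \<Rightarrow> 'v \<Rightarrow> 'x) \<Rightarrow> 'x \<Rightarrow> real \<Rightarrow> 'v \<Rightarrow> real" where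
  "hdot Dh F B x t v = blinfun_apply (Dh (x, t)) (F x + B x v, 1)"

definition cbf_wrt ::
  "('x::real_normed_vector \<Rightarrow> 'x) \<Rightarrow> ('x \<Rightarrow> 'v \<Rightarrow> 'x) \<Rightarrow> real \<Rightarrow> ereal \<Rightarrow>
   ('x \<times> real \<Rightarrow> real) \<Rightarrow> ('x \<times> real \<Rightarrow> ('x \<times> real) \<Rightarrow>\<^sub>L real) \<Rightarrow>
   (real \<Rightarrow> 'x set) \<Rightarrow> (real \<Rightarrow> real) \<Rightarrow> bool" where
  "cbf_wrt F B t0 tf h Dh D \<alpha> \<longleftrightarrow>
     continuous_on (UNIV \<times> time_dom t0 tf) Dh \<and>
     (\<forall>y \<in> UNIV \<times> time_dom t0 tf.
        (h has_derivative blinfun_apply (Dh y)) (at y within (UNIV \<times> time_dom t0 tf))) \<and>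
     (\<forall>x. \<forall>t \<in> time_dom t0 tf. h (x, t) = 0 \<longrightarrow>
        (\<exists>w. blinfun_apply (Dh (x, t)) (w, 0) \<noteq> 0)) \<and>
     (\<forall>t \<in> time_dom t0 tf. {x. h (x, t) \<ge> 0} \<subseteq> D t) \<and>
     (\<forall>(x, t) \<in> flow_graph (time_dom t0 tf) D.
        (\<exists>v. hdot Dh F B x t v > - \<alpha> (h (x, t))))"

definition cbf ::
  "('x::real_normed_vector \<Rightarrow> 'x) \<Rightarrow> ('x \<Rightarrow> 'v \<Rightarrow> 'x) \<Rightarrow> real \<Rightarrow> ereal \<Rightarrow>
   ('x \<times> real \<Rightarrow> real) \<Rightarrow> (real \<Rightarrow> 'x set) \<Rightarrow> (real \<Rightarrow> real) \<Rightarrow> bool" where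
  "cbf F B t0 tf h D \<alpha> \<longleftrightarrow> (\<exists>Dh. cbf_wrt F B t0 tf h Dh D \<alpha>)"

end

theory Submission
  imports Defs
begin

text \<open>Put \<open>e = z - k(p, t)\<close>. Along the cascade, the derivative of
  \<open>h\<^sub>1 = h - \<parallel>e\<parallel>\<^sup>2 / (2\<sigma>)\<close> is \<open>h'(p, t, z) - \<langle>e, f\<^sub>1 + G\<^sub>1 u - k'\<rangle> / \<sigma>\<close>, where \<open>h'(p, t, z)\<close>
  is the derivative of \<open>h\<close> along the first-order system with input \<open>z\<close> and \<open>k'\<close> that of \<open>k\<close>.
  Where \<open>e = 0\<close> the input drops out and \<open>h\<^sub>1 = h\<close>, so the safety of \<open>k\<close> and \<open>\<alpha> \<le> \<alpha>\<^sub>1\<close> give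
  the CBF inequality; where \<open>e \<noteq> 0\<close> the surjectivity of \<open>G\<^sub>1\<close> lets \<open>u\<close> make the derivative as
  large as we like. As \<open>h\<^sub>1 \<le> h\<close>, the flow \<open>D\<^sub>1(t) = D(t) \<times> \<real>\<^sup>z\<close> contains the zero superlevel
  sets of \<open>h\<^sub>1\<close>.\<close>

definition strict_feedback_drift ::
  "('a \<Rightarrow> 'a) \<Rightarrow> ('a \<Rightarrow> 'b \<Rightarrow> 'a::plus) \<Rightarrow> ('a \<Rightarrow> 'b \<Rightarrow> 'b) \<Rightarrow> 'a \<times> 'b \<Rightarrow> 'a \<times> 'b" where
  "strict_feedback_drift F B F1 = (\<lambda>(p, z). (F p + B p z, F1 p z))"

definition strict_feedback_input :: "('a \<Rightarrow> 'b \<Rightarrow> 'u \<Rightarrow> 'b) \<Rightarrow> 'a \<times> 'b \<Rightarrow> 'u \<Rightarrow> 'a::zero \<times> 'b" where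
  "strict_feedback_input B1 = (\<lambda>(p, z) u. (0, B1 p z u))"

lift_definition proj_pt ::
  "(('a::real_normed_vector \<times> 'b::real_normed_vector) \<times> real) \<Rightarrow>\<^sub>L ('a \<times> real)"
  is "\<lambda>((p, z), t). (p, t)"
  unfolding case_prod_beta
  by (intro bounded_linear_Pair bounded_linear_compose[OF bounded_linear_fst] bounded_linear_fst
      bounded_linear_snd)

abbreviation proj_z :: "(('a::real_normed_vector \<times> 'b::real_normed_vector) \<times> real) \<Rightarrow>\<^sub>L 'b" where
  "proj_z \<equiv> snd_blinfun o\<^sub>L fst_blinfun"

lemma proj_pt_apply [simp]: "proj_pt ((p, z), t) = (p, t)"
  by (simp add: proj_pt.rep_eq)

lemma proj_pt_image: "proj_pt ` (UNIV \<times> T) \<subseteq> UNIV \<times> T"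
  by (auto simp: proj_pt.rep_eq)

definition backstep_barrier ::
  "real \<Rightarrow> ('a \<times> real \<Rightarrow> real) \<Rightarrow> ('a \<times> real \<Rightarrow> 'b::real_normed_vector) \<Rightarrow>
   ('a \<times> 'b) \<times> real \<Rightarrow> real" where
  "backstep_barrier \<sigma> h k = (\<lambda>((p, z), t). h (p, t) - 1 / (2 * \<sigma>) * (norm (z - k (p, t)))\<^sup>2)"

definition backstep_barrier_deriv ::
  "real \<Rightarrow> ('a::real_normed_vector \<times> real \<Rightarrow> 'b::real_inner) \<Rightarrow>
   ('a \<times> real \<Rightarrow> ('a \<times> real) \<Rightarrow>\<^sub>L real) \<Rightarrow> ('a \<times> real \<Rightarrow> ('a \<times> real) \<Rightarrow>\<^sub>L 'b) \<Rightarrow>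
   ('a \<times> 'b) \<times> real \<Rightarrow> (('a \<times> 'b) \<times> real) \<Rightarrow>\<^sub>L real" where
  "backstep_barrier_deriv \<sigma> k Dh Dk y =
     (Dh (proj_pt y) o\<^sub>L proj_pt) -
     (1 / \<sigma>) *\<^sub>R (blinfun_inner_left (proj_z y - k (proj_pt y)) o\<^sub>L
       (proj_z - (Dk (proj_pt y) o\<^sub>L proj_pt)))"

lemma backstep_barrier_deriv_apply:
  "backstep_barrier_deriv \<sigma> k Dh Dk ((p, z), t) ((a, b), s) =
     Dh (p, t) (a, s) - (1 / \<sigma>) * ((b - Dk (p, t) (a, s)) \<bullet> (z - k (p, t)))"
  by (simp add: backstep_barrier_deriv_def blinfun.diff_left blinfun.diff_right blinfun.scaleR_left)

lemma backstep_barrier_le: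
  assumes "\<sigma> \<ge> 0"
  shows "backstep_barrier \<sigma> h k ((p, z), t) \<le> h (p, t)"
  using assms by (simp add: backstep_barrier_def)

lemma backstep_barrier_on_k: "backstep_barrier \<sigma> h k ((p, k (p, t)), t) = h (p, t)"
  by (simp add: backstep_barrier_def)

lemma continuous_on_backstep_barrier_deriv:
  assumes "continuous_on (UNIV \<times> T) Dh" and "continuous_on (UNIV \<times> T) Dk"
    and "continuous_on (UNIV \<times> T) k"
  shows "continuous_on (UNIV \<times> T) (backstep_barrier_deriv \<sigma> k Dh Dk)"
proof -
  have "continuous_on (UNIV \<times> T) (blinfun_apply proj_pt)"
    by (intro continuous_intros)
  note compose = continuous_on_compose2[OF _ this proj_pt_image]
  show ?thesis
    unfolding backstep_barrier_deriv_def by (intro continuous_intros compose assms)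
qed

lemma has_derivative_backstep_barrier:
  fixes h :: "'a::real_normed_vector \<times> real \<Rightarrow> real" and k :: "'a \<times> real \<Rightarrow> 'b::real_inner"
  assumes y: "y \<in> UNIV \<times> T"
    and h_der: "(h has_derivative blinfun_apply (Dh (proj_pt y))) (at (proj_pt y) within UNIV \<times> T)"
    and k_der: "(k has_derivative blinfun_apply (Dk (proj_pt y))) (at (proj_pt y) within UNIV \<times> T)"
  shows "(backstep_barrier \<sigma> h k has_derivative blinfun_apply (backstep_barrier_deriv \<sigma> k Dh Dk y)) (at y within UNIV \<times> T)"
proof -
  note blinfun_der = bounded_linear_imp_has_derivative[OF blinfun.bounded_linear_right]
  have chain: "((\<lambda>y. g (proj_pt y)) has_derivative (\<lambda>w. Dg (proj_pt w))) (at y within UNIV \<times> T)"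
    if "(g has_derivative Dg) (at (proj_pt y) within UNIV \<times> T)" for g :: "_ \<Rightarrow> 'c::real_normed_vector" and Dg
    using diff_chain_within[OF blinfun_der has_derivative_subset[OF that proj_pt_image]]
    by (simp add: o_def)
  define e where "e y = proj_z y - k (proj_pt y)" for y
  have e_der: "(e has_derivative (\<lambda>w. proj_z w - Dk (proj_pt y) (proj_pt w))) (at y within UNIV \<times> T)"
    unfolding e_def by (intro derivative_intros blinfun_der chain[OF k_der])
  have "backstep_barrier \<sigma> h k = (\<lambda>y. h (proj_pt y) - 1 / (2 * \<sigma>) * (e y \<bullet> e y))"
    by (auto simp: fun_eq_iff backstep_barrier_def e_def power2_norm_eq_inner)
  moreover have "((\<lambda>y. h (proj_pt y) - 1 / (2 * \<sigma>) * (e y \<bullet> e y)) has_derivative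
      blinfun_apply (backstep_barrier_deriv \<sigma> k Dh Dk y)) (at y within UNIV \<times> T)"
    by (rule has_derivative_eq_rhs, (rule derivative_intros chain[OF h_der] e_der)+)
      (simp add: fun_eq_iff backstep_barrier_deriv_def e_def blinfun.diff_left blinfun.diff_right
        blinfun.scaleR_left inner_commute)
  ultimately show ?thesis by simp
qed

lemma backstep_barrier_deriv_nondegenerate:
  fixes Dh :: "'a::real_normed_vector \<times> real \<Rightarrow> ('a \<times> real) \<Rightarrow>\<^sub>L real"
    and Dk :: "'a \<times> real \<Rightarrow> ('a \<times> real) \<Rightarrow>\<^sub>L 'b::real_inner"
  assumes "\<sigma> \<noteq> 0" and "backstep_barrier \<sigma> h k ((p, z), t) = 0"
    and "h (p, t) = 0 \<Longrightarrow> \<exists>w. Dh (p, t) (w, 0) \<noteq> 0"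
  shows "\<exists>w. backstep_barrier_deriv \<sigma> k Dh Dk ((p, z), t) (w, 0) \<noteq> 0"
proof (cases "z = k (p, t)")
  case True
  then obtain a where "Dh (p, t) (a, 0) \<noteq> 0"
    using assms(2,3) by (auto simp: backstep_barrier_on_k)
  then have "backstep_barrier_deriv \<sigma> k Dh Dk ((p, z), t) ((a, 0), 0) \<noteq> 0"
    using True by (simp add: backstep_barrier_deriv_apply)
  then show ?thesis by blast
next
  case False
  have "backstep_barrier_deriv \<sigma> k Dh Dk ((p, z), t) ((0, z - k (p, t)), 0) =
      - (1 / \<sigma>) * ((z - k (p, t)) \<bullet> (z - k (p, t)))"
    by (simp add: backstep_barrier_deriv_apply zero_prod_def[symmetric] blinfun.zero_right)
  also have "\<dots> \<noteq> 0"
    using False assms(1) by simp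
  finally show ?thesis by blast
qed

lemma hdot_backstep_barrier:
  fixes Dh :: "'a::real_normed_vector \<times> real \<Rightarrow> ('a \<times> real) \<Rightarrow>\<^sub>L real"
    and Dk :: "'a \<times> real \<Rightarrow> ('a \<times> real) \<Rightarrow>\<^sub>L 'b::real_inner"
  shows "hdot (backstep_barrier_deriv \<sigma> k Dh Dk) (strict_feedback_drift F B F1) (strict_feedback_input B1)
      (p, z) t u =
   hdot Dh F B p t z - (1 / \<sigma>) * ((F1 p z + B1 p z u - Dk (p, t) (F p + B p z, 1)) \<bullet> (z - k (p, t)))"
  by (simp add: hdot_def backstep_barrier_deriv_apply strict_feedback_drift_def
      strict_feedback_input_def)

lemma surj_inner_eq:
  fixes e :: "'a::real_inner"
  assumes "surj g" and "e \<noteq> 0"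
  shows "\<exists>u. g u \<bullet> e = r"
proof -
  obtain u where "g u = (r / (e \<bullet> e)) *\<^sub>R e"
    using assms(1) by (metis surjD)
  then have "g u \<bullet> e = r"
    using assms(2) by simp
  then show ?thesis ..
qed

lemma backstep_barrier_safe_input:
  fixes Dh :: "'a::real_normed_vector \<times> real \<Rightarrow> ('a \<times> real) \<Rightarrow>\<^sub>L real"
    and Dk :: "'a \<times> real \<Rightarrow> ('a \<times> real) \<Rightarrow>\<^sub>L 'b::real_inner"
  assumes \<sigma>: "\<sigma> > 0" and B1: "surj (B1 p z)"
    and k_safe: "hdot Dh F B p t (k (p, t)) > - \<alpha> (h (p, t))"
    and \<alpha>1: "\<alpha> (h (p, t)) \<le> \<alpha>1 (h (p, t))"
  shows "\<exists>u. hdot (backstep_barrier_deriv \<sigma> k Dh Dk) (strict_feedback_drift F B F1)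
      (strict_feedback_input B1) (p, z) t u > - \<alpha>1 (backstep_barrier \<sigma> h k ((p, z), t))"
proof (cases "z = k (p, t)")
  case True
  then show ?thesis
    using k_safe \<alpha>1 by (simp add: hdot_backstep_barrier backstep_barrier_on_k)
next
  case False
  define e where "e = z - k (p, t)"
  define c where "c = hdot Dh F B p t z"
  define d where "d = F1 p z - Dk (p, t) (F p + B p z, 1)"
  define M where "M = \<bar>c\<bar> + \<bar>\<alpha>1 (backstep_barrier \<sigma> h k ((p, z), t))\<bar> + 1"
  obtain u where u: "B1 p z u \<bullet> e = - (d \<bullet> e) - \<sigma> * M"
    using surj_inner_eq[OF B1] False by (metis e_def eq_iff_diff_eq_0)
  have "(F1 p z + B1 p z u - Dk (p, t) (F p + B p z, 1)) \<bullet> e = - \<sigma> * M"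
    by (simp add: d_def inner_diff_left inner_add_left u algebra_simps)
  then have "hdot (backstep_barrier_deriv \<sigma> k Dh Dk) (strict_feedback_drift F B F1)
      (strict_feedback_input B1) (p, z) t u = c + M"
    using \<sigma> by (simp add: hdot_backstep_barrier c_def e_def)
  then show ?thesis
    unfolding M_def by (intro exI[of _ u]) linarith
qed

lemma cbf_wrt_backstep:
  fixes F :: "'a::real_normed_vector \<Rightarrow> 'a" and B :: "'a \<Rightarrow> 'b::real_inner \<Rightarrow> 'a"
    and F1 :: "'a \<Rightarrow> 'b \<Rightarrow> 'b" and B1 :: "'a \<Rightarrow> 'b \<Rightarrow> 'u \<Rightarrow> 'b"
    and t0 :: real and tf :: ereal
  defines "T \<equiv> time_dom t0 tf"
  assumes h_cbf: "cbf_wrt F B t0 tf h Dh D \<alpha>"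
    and Dk_cont: "continuous_on (UNIV \<times> T) Dk"
    and k_der: "\<And>y. y \<in> UNIV \<times> T \<Longrightarrow>
      (k has_derivative blinfun_apply (Dk y)) (at y within UNIV \<times> T)"
    and k_safe: "\<forall>(p, t) \<in> flow_graph T D. hdot Dh F B p t (k (p, t)) > - \<alpha> (h (p, t))"
    and \<sigma>: "\<sigma> > 0" and \<alpha>1: "\<forall>s. \<alpha> s \<le> \<alpha>1 s" and B1: "\<forall>p z. surj (B1 p z)"
  shows "cbf_wrt (strict_feedback_drift F B F1) (strict_feedback_input B1) t0 tf
    (backstep_barrier \<sigma> h k) (backstep_barrier_deriv \<sigma> k Dh Dk) (\<lambda>t. D t \<times> UNIV) \<alpha>1"
proof -
  have k_cont: "continuous_on (UNIV \<times> T) k"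
    unfolding continuous_on_eq_continuous_within using k_der has_derivative_continuous by blast
  from h_cbf have Dh_cont: "continuous_on (UNIV \<times> T) Dh"
    and h_der: "\<And>y. y \<in> UNIV \<times> T \<Longrightarrow>
      (h has_derivative blinfun_apply (Dh y)) (at y within UNIV \<times> T)"
    and Dh_nondeg: "\<And>x t. t \<in> T \<Longrightarrow> h (x, t) = 0 \<Longrightarrow> \<exists>w. Dh (x, t) (w, 0) \<noteq> 0"
    and D_superlevel: "\<And>t. t \<in> T \<Longrightarrow> {x. h (x, t) \<ge> 0} \<subseteq> D t"
    unfolding cbf_wrt_def T_def by blast+
  show ?thesis
    unfolding cbf_wrt_def T_def[symmetric]
  proof (intro conjI)
    show "continuous_on (UNIV \<times> T) (backstep_barrier_deriv \<sigma> k Dh Dk)"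
      using Dh_cont Dk_cont k_cont by (rule continuous_on_backstep_barrier_deriv)
    show "\<forall>y \<in> UNIV \<times> T. (backstep_barrier \<sigma> h k has_derivative backstep_barrier_deriv \<sigma> k Dh Dk y)
        (at y within UNIV \<times> T)"
      using has_derivative_backstep_barrier h_der k_der proj_pt_image by blast
    show "\<forall>x. \<forall>t \<in> T. backstep_barrier \<sigma> h k (x, t) = 0 \<longrightarrow>
        (\<exists>w. backstep_barrier_deriv \<sigma> k Dh Dk (x, t) (w, 0) \<noteq> 0)"
    proof (intro allI ballI impI)
      fix x t
      assume "t \<in> T" and "backstep_barrier \<sigma> h k (x, t) = 0"
      moreover obtain p z where "x = (p, z)"
        by fastforce
      moreover have "\<sigma> \<noteq> 0"
        using \<sigma> by simp
      ultimately show "\<exists>w. backstep_barrier_deriv \<sigma> k Dh Dk (x, t) (w, 0) \<noteq> 0"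
        using Dh_nondeg by (blast intro: backstep_barrier_deriv_nondegenerate)
    qed
    show "\<forall>t \<in> T. {x. backstep_barrier \<sigma> h k (x, t) \<ge> 0} \<subseteq> D t \<times> UNIV"
    proof (intro ballI subsetI)
      fix t x
      assume t: "t \<in> T" and "x \<in> {x. backstep_barrier \<sigma> h k (x, t) \<ge> 0}"
      moreover obtain p z where x: "x = (p, z)"
        by fastforce
      ultimately have "h (p, t) \<ge> 0"
        using backstep_barrier_le[of \<sigma> h k p z t] \<sigma> by simp
      then show "x \<in> D t \<times> UNIV"
        using D_superlevel[OF t] x by blast
    qed
    show "\<forall>(x, t) \<in> flow_graph T (\<lambda>t. D t \<times> UNIV). \<exists>u.
        hdot (backstep_barrier_deriv \<sigma> k Dh Dk) (strict_feedback_drift F B F1)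
          (strict_feedback_input B1) x t u > - \<alpha>1 (backstep_barrier \<sigma> h k (x, t))"
    proof (intro ballI)
      fix y :: "('a \<times> 'b) \<times> real"
      assume "y \<in> flow_graph T (\<lambda>t. D t \<times> UNIV)"
      then obtain p z t where y: "y = ((p, z), t)" and "(p, t) \<in> flow_graph T D"
        by (auto simp: flow_graph_def)
      with k_safe \<sigma> B1 \<alpha>1 show "case y of (x, t) \<Rightarrow> \<exists>u.
          hdot (backstep_barrier_deriv \<sigma> k Dh Dk) (strict_feedback_drift F B F1)
            (strict_feedback_input B1) x t u > - \<alpha>1 (backstep_barrier \<sigma> h k (x, t))"
        unfolding y prod.case by (intro backstep_barrier_safe_input) auto
    qed
  qed
qed

lemma cbf_backstep:
  fixes F :: "'a::real_normed_vector \<Rightarrow> 'a" and B :: "'a \<Rightarrow> 'b::real_inner \<Rightarrow> 'a"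
    and F1 :: "'a \<Rightarrow> 'b \<Rightarrow> 'b" and B1 :: "'a \<Rightarrow> 'b \<Rightarrow> 'u \<Rightarrow> 'b"
  assumes "cbf_wrt F B t0 tf h Dh D \<alpha>"
    and "C1_on (UNIV \<times> time_dom t0 tf) k"
    and "\<forall>(p, t) \<in> flow_graph (time_dom t0 tf) D. hdot Dh F B p t (k (p, t)) > - \<alpha> (h (p, t))"
    and "\<sigma> > 0" and "\<forall>s. \<alpha> s \<le> \<alpha>1 s" and "\<forall>p z. surj (B1 p z)"
  shows "cbf (strict_feedback_drift F B F1) (strict_feedback_input B1) t0 tf
    (backstep_barrier \<sigma> h k) (\<lambda>t. D t \<times> UNIV) \<alpha>1"
proof -
  from \<open>C1_on (UNIV \<times> time_dom t0 tf) k\<close> obtain Dk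
    where "continuous_on (UNIV \<times> time_dom t0 tf) Dk"
      and "\<And>y. y \<in> UNIV \<times> time_dom t0 tf \<Longrightarrow>
        (k has_derivative blinfun_apply (Dk y)) (at y within UNIV \<times> time_dom t0 tf)"
    unfolding C1_on_def by blast
  with assms show ?thesis
    unfolding cbf_def by (blast intro: cbf_wrt_backstep)
qed

theorem mainTheorem2:
  fixes f :: "real^'p \<Rightarrow> real^'p" and G :: "real^'p \<Rightarrow> real^'z^'p"
    and f1 :: "real^'p \<Rightarrow> real^'z \<Rightarrow> real^'z" and G1 :: "real^'p \<Rightarrow> real^'z \<Rightarrow> real^'m^'z"
    and t0 :: real and tf :: ereal
    and h :: "(real^'p) \<times> real \<Rightarrow> real"
    and Dh :: "(real^'p) \<times> real \<Rightarrow> ((real^'p) \<times> real) \<Rightarrow>\<^sub>L real"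
    and D :: "real \<Rightarrow> (real^'p) set"
    and k :: "(real^'p) \<times> real \<Rightarrow> real^'z"
    and \<alpha> \<alpha>1 :: "real \<Rightarrow> real" and \<sigma> :: real
  assumes f_lip: "loc_lipschitz f" and G_lip: "loc_lipschitz G"
    and G_rank: "\<forall>p. rank (G p) = CARD('p)"
    and f1_lip: "loc_lipschitz (\<lambda>(p, z). f1 p z)" and G1_lip: "loc_lipschitz (\<lambda>(p, z). G1 p z)"
    and G1_rank: "\<forall>p z. rank (G1 p z) = CARD('z)"
    and \<alpha>_K: "ext_class_Kinf \<alpha>"
    and h_cbf: "cbf_wrt f (\<lambda>p z. G p *v z) t0 tf h Dh D \<alpha>"
    and k_C1: "C1_on (UNIV \<times> time_dom t0 tf) k"
    and k_safe: "\<forall>(p, t) \<in> flow_graph (time_dom t0 tf) D.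
                   hdot Dh f (\<lambda>p z. G p *v z) p t (k (p, t)) > - \<alpha> (h (p, t))"
    and \<sigma>_pos: "\<sigma> > 0"
    and \<alpha>1_K: "ext_class_Kinf \<alpha>1" and \<alpha>1_ge: "\<forall>s. \<alpha>1 s \<ge> \<alpha> s"
  shows "\<exists>D1. cbf (\<lambda>(p, z). (f p + G p *v z, f1 p z)) (\<lambda>(p, z) u. (0, G1 p z *v u)) t0 tf
                 (\<lambda>((p, z), t). h (p, t) - 1 / (2 * \<sigma>) * (norm (z - k (p, t)))\<^sup>2) D1 \<alpha>1"
proof -
  have "\<forall>p z. surj (\<lambda>u. G1 p z *v u)"
    using G1_rank full_rank_surjective by blast
  then have "cbf (strict_feedback_drift f (\<lambda>p z. G p *v z) f1) (strict_feedback_input (\<lambda>p z u. G1 p z *v u))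
      t0 tf (backstep_barrier \<sigma> h k) (\<lambda>t. D t \<times> UNIV) \<alpha>1"
    by (rule cbf_backstep[OF h_cbf k_C1 k_safe \<sigma>_pos \<alpha>1_ge])
  then show ?thesis
    unfolding strict_feedback_drift_def strict_feedback_input_def backstep_barrier_def by blast
qed

end
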